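(* Let $d\ge3$ and consider the two-link parallel network with unit demand and latencies $\ell_1(x_1)=x_1^d$ and $\ell_2(x_2)=\left(\frac{d-1}{d}\right)^d$ (constant). Then $\mathcal{T}(c)\ne\emptyset$ if and only if $c\le\left(\frac{d-1}{d}\right)^{d-1}$; for such $c$, $\mathcal{T}(c)=\{(c,c)\}$ and the induced flow is $x(c)=x(0)=\left(\frac{d-1}{d},\frac1d\right)$. With the convention that $\sup_{t\in\emptyset}C(x(t))=\infty$, it follows that $$\inf_{c\in\mathbb{R}_+}\ \sup_{t\in\mathcal{T}(c)}\frac{C(x(t))}{C(x^* )}=\frac{(d+1)^{(d+1)/d}}{(d+1)^{(d+1)/d}-(d-1)},$$ where $x^*=\left(\frac{d-1}{d(d+1)^{1/d}},\,1-\frac{d-1}{d(d+1)^{1/d}}\right)$ is the optimal flow; this quantity tends to $\infty$ as $d\to\infty$.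
   Context: Flows $x\in\mathbb{R}^2_+$ with $x_1+x_2=1$; $C(x)=\sum_i\ell_i(x_i)x_i$; $x^*$ minimizes $C$. For tolls $t\in\mathbb{R}^2_+$, $x(t)$ is the unique Wardrop equilibrium for $t$ (for all $i,j$ with $x_i>0$: $\ell_i(x_i)+t_i\le\ell_j(x_j)+t_j$); $x(0)$ is the untolled one. Profit $\Pi_i(t)=t_ix_i(t)$. For $c\in\mathbb{R}_+$, $\mathcal{T}(c)$ is the set of toll vectors with $0\le t_i\le c$ such that for every $i$ and every $t'_i\in[0,c]$, $\Pi_i(t_i,t_{-i})\ge\Pi_i(t'_i,t_{-i})$ (flow recomputed as the Wardrop equilibrium). *)

theory Defs
  imports "HOL-Analysis.Analysis"
begin

definition feasible_flow :: "real \<times> real \<Rightarrow> bool" where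
  "feasible_flow x \<longleftrightarrow> fst x \<ge> 0 \<and> snd x \<ge> 0 \<and> fst x + snd x = 1"

text \<open>Wardrop equilibrium for toll vector t: every used link has minimal
tolled latency (the cases i = j are trivial).\<close>
definition wardrop ::
  "(real \<Rightarrow> real) \<Rightarrow> (real \<Rightarrow> real) \<Rightarrow> real \<times> real \<Rightarrow> real \<times> real \<Rightarrow> bool" where
  "wardrop l1 l2 t x \<longleftrightarrow> feasible_flow x
     \<and> (fst x > 0 \<longrightarrow> l1 (fst x) + fst t \<le> l2 (snd x) + snd t)
     \<and> (snd x > 0 \<longrightarrow> l2 (snd x) + snd t \<le> l1 (fst x) + fst t)"

text \<open>x(t): the (unique) Wardrop equilibrium for tolls t.\<close>
definition eq_flow ::
  "(real \<Rightarrow> real) \<Rightarrow> (real \<Rightarrow> real) \<Rightarrow> real \<times> real \<Rightarrow> real \<times> real" where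
  "eq_flow l1 l2 t = (THE x. wardrop l1 l2 t x)"

definition social_cost :: "(real \<Rightarrow> real) \<Rightarrow> (real \<Rightarrow> real) \<Rightarrow> real \<times> real \<Rightarrow> real" where
  "social_cost l1 l2 x = l1 (fst x) * fst x + l2 (snd x) * snd x"

definition profit1 :: "(real \<Rightarrow> real) \<Rightarrow> (real \<Rightarrow> real) \<Rightarrow> real \<times> real \<Rightarrow> real" where
  "profit1 l1 l2 t = fst t * fst (eq_flow l1 l2 t)"

definition profit2 :: "(real \<Rightarrow> real) \<Rightarrow> (real \<Rightarrow> real) \<Rightarrow> real \<times> real \<Rightarrow> real" where
  "profit2 l1 l2 t = snd t * snd (eq_flow l1 l2 t)"

definition toll_eq :: "(real \<Rightarrow> real) \<Rightarrow> (real \<Rightarrow> real) \<Rightarrow> real \<Rightarrow> (real \<times> real) set" where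
  "toll_eq l1 l2 c = {t. 0 \<le> fst t \<and> fst t \<le> c \<and> 0 \<le> snd t \<and> snd t \<le> c
     \<and> (\<forall>t1' \<in> {0..c}. profit1 l1 l2 t \<ge> profit1 l1 l2 (t1', snd t))
     \<and> (\<forall>t2' \<in> {0..c}. profit2 l1 l2 t \<ge> profit2 l1 l2 (fst t, t2'))}"

definition worst_ratio ::
  "(real \<Rightarrow> real) \<Rightarrow> (real \<Rightarrow> real) \<Rightarrow> real \<times> real \<Rightarrow> real \<Rightarrow> ereal" where
  "worst_ratio l1 l2 xopt c = (if toll_eq l1 l2 c = {} then \<infinity>
     else (SUP t \<in> toll_eq l1 l2 c.
             ereal (social_cost l1 l2 (eq_flow l1 l2 t) / social_cost l1 l2 xopt)))"

definition lat1 :: "nat \<Rightarrow> real \<Rightarrow> real" where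
  "lat1 d y = y ^ d"

definition lat2 :: "nat \<Rightarrow> real \<Rightarrow> real" where
  "lat2 d y = ((real d - 1) / real d) ^ d"

definition ratio_value :: "nat \<Rightarrow> real" where
  "ratio_value d = (real d + 1) powr ((real d + 1) / real d)
     / ((real d + 1) powr ((real d + 1) / real d) - (real d - 1))"

end

theory Submission
  imports Defs "HOL-Real_Asymp.Real_Asymp"
begin

text \<open>
  With \<open>L = a ^ d\<close>, \<open>a = (d - 1) / d\<close>, the tolls \<open>(t1, t2)\<close> fix the flow \<open>x\<close> on link 1 by
  \<open>x ^ d = L + t2 - t1\<close>. Regarding each owner's profit as a function of the flow it induces, a toll
  equilibrium satisfies one-sided first-order conditions on every side where the cap \<open>c\<close> leaves
  room to move. Comparing them rules out \<open>t1 < t2\<close> and \<open>t2 < t1\<close> and forces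
  \<open>t1 = t2 = c \<le> a ^ (d - 1)\<close>, so the flow stays \<open>(a, 1 - a)\<close>. Conversely, at \<open>(c, c)\<close> owner 1's
  profit is bounded via the tangent of \<open>y ^ (d + 1)\<close> at \<open>a\<close>, and owner 2's via the maximum of
  \<open>y ^ (d - 1) * (1 - y)\<close> at \<open>a\<close>. The optimal flow solves \<open>(d + 1) * x ^ d = L\<close>, which yields the ratio.
\<close>

section \<open>Wardrop equilibria on two parallel links\<close>

lemma wardrop_fst_pos:
  assumes "wardrop l1 l2 t x" and "l1 0 + fst t < l2 1 + snd t"
  shows "0 < fst x"
proof (rule ccontr)
  assume "\<not> 0 < fst x"
  with assms(1) have "fst x = 0" "snd x = 1"
    by (auto simp: wardrop_def feasible_flow_def)
  with assms show False by (auto simp: wardrop_def)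
qed

lemma wardrop_snd_pos:
  assumes "wardrop l1 l2 t x" and "l2 0 + snd t < l1 1 + fst t"
  shows "0 < snd x"
proof (rule ccontr)
  assume "\<not> 0 < snd x"
  with assms(1) have "snd x = 0" "fst x = 1"
    by (auto simp: wardrop_def feasible_flow_def)
  with assms show False by (auto simp: wardrop_def)
qed

lemma wardrop_unique:
  assumes l1: "strict_mono_on {0..1} l1" and l2: "mono_on {0..1} l2"
    and "wardrop l1 l2 t x" and "wardrop l1 l2 t x'"
  shows "x = x'"
proof -
  have no_less: False if u: "wardrop l1 l2 t u" and v: "wardrop l1 l2 t v" and "fst u < fst v" for u v
  proof -
    from u v have flows: "0 \<le> fst u" "snd u = 1 - fst u" "0 \<le> snd v" "snd v = 1 - fst v"
      by (auto simp: wardrop_def feasible_flow_def)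
    with \<open>fst u < fst v\<close> v have "l1 (fst v) + fst t \<le> l2 (snd v) + snd t"
      by (auto simp: wardrop_def)
    moreover from flows \<open>fst u < fst v\<close> u have "l2 (snd u) + snd t \<le> l1 (fst u) + fst t"
      by (auto simp: wardrop_def)
    moreover from flows \<open>fst u < fst v\<close> have "l1 (fst u) < l1 (fst v)"
      by (intro strict_mono_onD[OF l1]) auto
    moreover from flows \<open>fst u < fst v\<close> have "l2 (snd v) \<le> l2 (snd u)"
      by (intro mono_onD[OF l2]) auto
    ultimately show False by linarith
  qed
  from no_less[OF assms(3,4)] no_less[OF assms(4,3)] have "fst x = fst x'"
    by fastforce
  moreover from assms(3,4) have "snd x = 1 - fst x" "snd x' = 1 - fst x'"
    by (auto simp: wardrop_def feasible_flow_def)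
  ultimately show ?thesis by (simp add: prod_eq_iff)
qed

lemma eq_flow_eqI:
  assumes "strict_mono_on {0..1} l1" and "mono_on {0..1} l2" and "wardrop l1 l2 t x"
  shows "eq_flow l1 l2 t = x"
  unfolding eq_flow_def using wardrop_unique[OF assms(1,2)] assms(3) by blast

lemma eq_flow_power_eqI:
  fixes L :: real
  assumes "1 \<le> d" and "wardrop (\<lambda>y. y ^ d) (\<lambda>_. L) t x"
  shows "eq_flow (\<lambda>y. y ^ d) (\<lambda>_. L) t = x"
proof (rule eq_flow_eqI[OF _ _ assms(2)])
  show "strict_mono_on {0..1} (\<lambda>y::real. y ^ d)"
    using assms(1) by (intro strict_mono_onI power_strict_mono) auto
qed (simp add: mono_on_def)

lemma eq_flow_power_interior:
  fixes L :: real
  assumes "1 \<le> d" and "0 < y" "y < 1" and "y ^ d = L + t2 - t1"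
  shows "eq_flow (\<lambda>y. y ^ d) (\<lambda>_. L) (t1, t2) = (y, 1 - y)"
  using assms by (intro eq_flow_power_eqI) (auto simp: wardrop_def feasible_flow_def zero_power)

lemma eq_flow_power_link2_only:
  fixes L :: real
  assumes "1 \<le> d" and "L + t2 \<le> t1"
  shows "eq_flow (\<lambda>y. y ^ d) (\<lambda>_. L) (t1, t2) = (0, 1)"
  using assms by (intro eq_flow_power_eqI) (auto simp: wardrop_def feasible_flow_def zero_power)

lemma eq_flow_power_link1_only:
  fixes L :: real
  assumes "1 \<le> d" and "1 + t1 \<le> L + t2"
  shows "eq_flow (\<lambda>y. y ^ d) (\<lambda>_. L) (t1, t2) = (1, 0)"
  using assms by (intro eq_flow_power_eqI) (auto simp: wardrop_def feasible_flow_def zero_power)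

lemma wardrop_eq_flow_power:
  fixes L :: real
  assumes d: "1 \<le> d"
  shows "wardrop (\<lambda>y. y ^ d) (\<lambda>_. L) (t1, t2) (eq_flow (\<lambda>y. y ^ d) (\<lambda>_. L) (t1, t2))"
proof -
  consider "L + t2 \<le> t1" | "1 + t1 \<le> L + t2" | "0 < L + t2 - t1" "L + t2 - t1 < 1"
    by linarith
  then show ?thesis
  proof cases
    case 1
    then show ?thesis using d
      by (simp add: eq_flow_power_link2_only wardrop_def feasible_flow_def zero_power)
  next
    case 2
    then show ?thesis
      using d by (simp add: eq_flow_power_link1_only wardrop_def feasible_flow_def)
  next
    case 3
    define y where "y = root d (L + t2 - t1)"
    have y: "0 < y" "y < 1" "y ^ d = L + t2 - t1"
      using 3 d by (simp_all add: y_def real_root_pow_pos)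
    then show ?thesis
      by (simp add: eq_flow_power_interior[OF d y] wardrop_def feasible_flow_def)
  qed
qed

section \<open>Elementary inequalities and one-sided maxima\<close>

lemma power_ge_tangent:
  fixes a y :: real
  assumes a: "0 < a" and y: "0 \<le> y"
  shows "a ^ n + real n * a ^ (n - 1) * (y - a) \<le> y ^ n"
proof (cases n)
  case (Suc m)
  have "a ^ n + real n * a ^ (n - 1) * (y - a) = a ^ n * (1 + real n * ((y - a) / a))"
    using a by (simp add: Suc field_simps)
  also have "\<dots> \<le> a ^ n * (1 + (y - a) / a) ^ n"
    using a y by (intro mult_left_mono Bernoulli_inequality) (auto simp: field_simps)
  also have "\<dots> = y ^ n"
    using a by (simp add: power_divide field_simps)
  finally show ?thesis .
qed simp

lemma power_mult_one_minus_le: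
  fixes y :: real
  assumes n: "1 \<le> n" and y: "0 \<le> y" "y \<le> 1"
  shows "y ^ n * (1 - y) \<le> (real n / (real n + 1)) ^ n * (1 - real n / (real n + 1))"
proof (cases "y = 0")
  case False
  define a where "a = real n / (real n + 1)"
  have "0 < a" using n by (simp add: a_def)
  have tangent: "y ^ n + real n * y ^ (n - 1) * (a - y) \<le> a ^ n"
    using power_ge_tangent[of y a n] False y \<open>0 < a\<close> by simp
  have "y ^ n + real n * y ^ (n - 1) * (a - y) - (real n + 1) * (y ^ n * (1 - y))
      = (real n + 1) * y ^ (n - 1) * (y - a)\<^sup>2"
  proof -
    have "y ^ n = y ^ (n - 1) * y" using n by (simp flip: power_Suc2)
    then have "y ^ n + real n * y ^ (n - 1) * (a - y) - (real n + 1) * (y ^ n * (1 - y))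
        - (real n + 1) * y ^ (n - 1) * (y - a)\<^sup>2
        = y ^ (n - 1) * (real n - (real n + 1) * a) * (a - 2 * y)"
      by (simp add: algebra_simps power2_eq_square)
    also have "\<dots> = 0" by (simp add: a_def)
    finally show ?thesis by simp
  qed
  moreover have "0 \<le> (real n + 1) * y ^ (n - 1) * (y - a)\<^sup>2" using y by simp
  ultimately have "(real n + 1) * (y ^ n * (1 - y)) \<le> a ^ n" using tangent by linarith
  then have "y ^ n * (1 - y) \<le> a ^ n / (real n + 1)" by (simp add: field_simps)
  also have "\<dots> = a ^ n * (1 - a)" by (simp add: a_def field_simps)
  finally show ?thesis by (simp add: a_def)
qed (use n in \<open>simp add: zero_power\<close>)

lemma DERIV_nonpos_if_max_at_right:
  fixes f :: "real \<Rightarrow> real"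
  assumes "DERIV f x :> D" and "\<forall>\<^sub>F y in at_right x. f y \<le> f x"
  shows "D \<le> 0"
proof (rule ccontr)
  assume "\<not> D \<le> 0"
  then obtain e where "0 < e" and inc: "\<And>h. 0 < h \<Longrightarrow> h < e \<Longrightarrow> f x < f (x + h)"
    using DERIV_pos_inc_right[OF assms(1)] by force
  have "\<forall>\<^sub>F y in at_right x. f x < f y"
    unfolding eventually_at_right_field
    using \<open>0 < e\<close> inc[of "_ - x"] by (intro exI[of _ "x + e"]) auto
  with assms(2) have "\<forall>\<^sub>F y in at_right x. False"
    by eventually_elim simp
  then show False by simp
qed

lemma DERIV_nonneg_if_max_at_left:
  fixes f :: "real \<Rightarrow> real"
  assumes "DERIV f x :> D" and "\<forall>\<^sub>F y in at_left x. f y \<le> f x"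
  shows "0 \<le> D"
proof (rule ccontr)
  assume "\<not> 0 \<le> D"
  then obtain e where "0 < e" and dec: "\<And>h. 0 < h \<Longrightarrow> h < e \<Longrightarrow> f x < f (x - h)"
    using DERIV_neg_dec_left[OF assms(1)] by force
  have "\<forall>\<^sub>F y in at_left x. f x < f y"
    unfolding eventually_at_left_field
    using \<open>0 < e\<close> dec[of "x - _"] by (intro exI[of _ "x - e"]) auto
  with assms(2) have "\<forall>\<^sub>F y in at_left x. False"
    by eventually_elim simp
  then show False by simp
qed

lemma eventually_at_left_less: "\<forall>\<^sub>F y in at_left x. y < (x::real)"
  by (auto simp: eventually_at_left_field intro: exI[of _ "x - 1"])

lemma eventually_in_unit_interval:
  assumes "0 < x" "x < 1"
  shows "\<forall>\<^sub>F y in at x within S. 0 < y \<and> y < (1::real)"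
  using order_tendstoD[OF tendsto_ident_at, of 0 x S] order_tendstoD[OF tendsto_ident_at, of x 1 S] assms
  by (auto intro: eventually_conj)

section \<open>Toll equilibria for the latencies \<open>y ^ d\<close> and \<open>L\<close>\<close>

lemma toll_eq_bounds:
  assumes "(t1, t2) \<in> toll_eq l1 l2 c"
  shows "0 \<le> t1" "t1 \<le> c" "0 \<le> t2" "t2 \<le> c"
  using assms by (auto simp: toll_eq_def)

lemma toll_eq_best_response1:
  assumes "(t1, t2) \<in> toll_eq l1 l2 c" and "0 \<le> \<tau>" "\<tau> \<le> c"
  shows "profit1 l1 l2 (\<tau>, t2) \<le> profit1 l1 l2 (t1, t2)"
  using assms by (auto simp: toll_eq_def)

lemma toll_eq_best_response2:
  assumes "(t1, t2) \<in> toll_eq l1 l2 c" and "0 \<le> \<sigma>" "\<sigma> \<le> c"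
  shows "profit2 l1 l2 (t1, \<sigma>) \<le> profit2 l1 l2 (t1, t2)"
  using assms by (auto simp: toll_eq_def)

lemma toll_eq_power_interior:
  fixes L c t1 t2 :: real
  assumes d: "1 \<le> d" and L: "0 < L" "L < 1" and c: "0 < c"
    and t: "(t1, t2) \<in> toll_eq (\<lambda>y. y ^ d) (\<lambda>_. L) c"
  shows "0 < L + t2 - t1" and "L + t2 - t1 < 1"
proof -
  let ?F = "eq_flow (\<lambda>y. y ^ d) (\<lambda>_. L)"
  note bounds = toll_eq_bounds[OF t]
  show "0 < L + t2 - t1"
  proof (rule ccontr)
    assume "\<not> 0 < L + t2 - t1"
    then have "?F (t1, t2) = (0, 1)"
      using d by (intro eq_flow_power_link2_only) auto
    define \<tau> where "\<tau> = min c (L + t2) / 2"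
    have \<tau>: "0 < \<tau>" "\<tau> \<le> c" "\<tau> < L + t2"
      using c L bounds by (auto simp: \<tau>_def)
    have "0 < fst (?F (\<tau>, t2))"
      using \<tau> d by (intro wardrop_fst_pos[OF wardrop_eq_flow_power]) (auto simp: zero_power)
    then have "profit1 (\<lambda>y. y ^ d) (\<lambda>_. L) (t1, t2) < profit1 (\<lambda>y. y ^ d) (\<lambda>_. L) (\<tau>, t2)"
      using \<open>?F (t1, t2) = (0, 1)\<close> \<tau> by (simp add: profit1_def)
    with toll_eq_best_response1[OF t, of \<tau>] \<tau> show False by simp
  qed
  show "L + t2 - t1 < 1"
  proof (rule ccontr)
    assume "\<not> L + t2 - t1 < 1"
    then have "?F (t1, t2) = (1, 0)"
      using d by (intro eq_flow_power_link1_only) auto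
    define \<sigma> where "\<sigma> = min c (1 - L) / 2"
    have \<sigma>: "0 < \<sigma>" "\<sigma> \<le> c" "L + \<sigma> < 1 + t1"
      using c L bounds by (auto simp: \<sigma>_def min_def field_simps)
    have "0 < snd (?F (t1, \<sigma>))"
      using \<sigma> d by (intro wardrop_snd_pos[OF wardrop_eq_flow_power]) auto
    then have "profit2 (\<lambda>y. y ^ d) (\<lambda>_. L) (t1, t2) < profit2 (\<lambda>y. y ^ d) (\<lambda>_. L) (t1, \<sigma>)"
      using \<open>?F (t1, t2) = (1, 0)\<close> \<sigma> by (simp add: profit2_def)
    with toll_eq_best_response2[OF t, of \<sigma>] \<sigma> show False by simp
  qed
qed

lemma toll_eq_power_owner1_first_order:
  fixes L c t1 t2 x :: real
  assumes d: "1 \<le> d" and t: "(t1, t2) \<in> toll_eq (\<lambda>y. y ^ d) (\<lambda>_. L) c"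
    and x: "0 < x" "x < 1" "x ^ d = L + t2 - t1"
  shows "t1 \<le> real d * x ^ d" and "t1 < c \<Longrightarrow> real d * x ^ d \<le> t1"
proof -
  \<comment> \<open>owner 1 induces the flow \<open>y\<close> with the toll \<open>\<tau> y\<close>, earning \<open>f y\<close>\<close>
  define \<tau> where "\<tau> y = L + t2 - y ^ d" for y :: real
  define f where "f y = \<tau> y * y" for y
  have "\<tau> x = t1" using x by (simp add: \<tau>_def)
  note bounds = toll_eq_bounds[OF t]
  have best: "f y \<le> f x" if y: "0 < y" "y < 1" "0 \<le> \<tau> y" "\<tau> y \<le> c" for y
  proof -
    have "eq_flow (\<lambda>y. y ^ d) (\<lambda>_. L) (\<tau> y, t2) = (y, 1 - y)"
      using d y by (intro eq_flow_power_interior) (auto simp: \<tau>_def)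
    with eq_flow_power_interior[OF d x] toll_eq_best_response1[OF t, of "\<tau> y"] y \<open>\<tau> x = t1\<close>
    show ?thesis by (simp add: profit1_def f_def)
  qed
  have "DERIV f x :> \<tau> x - real d * x ^ (d - 1) * x"
    unfolding f_def \<tau>_def by (auto intro!: derivative_eq_intros)
  moreover have "x ^ (d - 1) * x = x ^ d" using d by (simp flip: power_Suc2)
  ultimately have deriv: "DERIV f x :> t1 - real d * x ^ d"
    using \<open>\<tau> x = t1\<close> by (simp add: mult.assoc)
  have \<tau>_lim: "(\<tau> \<longlongrightarrow> t1) (at x within S)" for S
    unfolding \<tau>_def using x by (auto intro!: tendsto_eq_intros)
  note interior = eventually_in_unit_interval[OF x(1,2)]
  show "t1 \<le> real d * x ^ d"
  proof (cases "t1 = 0")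
    case False
    with bounds have "\<forall>\<^sub>F y in at_right x. 0 < \<tau> y"
      by (intro order_tendstoD(1)[OF \<tau>_lim]) simp
    with interior eventually_at_right_less have "\<forall>\<^sub>F y in at_right x. f y \<le> f x"
    proof eventually_elim
      case (elim y)
      then have "\<tau> y \<le> \<tau> x" using x power_mono[of x y d] by (simp add: \<tau>_def)
      with elim \<open>\<tau> x = t1\<close> bounds show ?case by (intro best) auto
    qed
    then show ?thesis using DERIV_nonpos_if_max_at_right[OF deriv] by simp
  qed (use x(1) in simp)
  show "real d * x ^ d \<le> t1" if "t1 < c"
  proof -
    from interior order_tendstoD(2)[OF \<tau>_lim that] eventually_at_left_less
    have "\<forall>\<^sub>F y in at_left x. f y \<le> f x"
    proof eventually_elim
      case (elim y)
      then have "\<tau> x \<le> \<tau> y" by (simp add: \<tau>_def power_mono)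
      with elim \<open>\<tau> x = t1\<close> bounds show ?case by (intro best) auto
    qed
    then show ?thesis using DERIV_nonneg_if_max_at_left[OF deriv] by simp
  qed
qed

lemma toll_eq_power_owner2_first_order:
  fixes L c t1 t2 x :: real
  assumes d: "1 \<le> d" and t: "(t1, t2) \<in> toll_eq (\<lambda>y. y ^ d) (\<lambda>_. L) c"
    and x: "0 < x" "x < 1" "x ^ d = L + t2 - t1"
  shows "t2 \<le> real d * x ^ (d - 1) * (1 - x)" and "t2 < c \<Longrightarrow> real d * x ^ (d - 1) * (1 - x) \<le> t2"
proof -
  \<comment> \<open>owner 2 induces the flow \<open>y\<close> with the toll \<open>\<sigma> y\<close>, earning \<open>g y\<close>\<close>
  define \<sigma> where "\<sigma> y = t1 - L + y ^ d" for y :: real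
  define g where "g y = \<sigma> y * (1 - y)" for y
  have "\<sigma> x = t2" using x by (simp add: \<sigma>_def)
  note bounds = toll_eq_bounds[OF t]
  have best: "g y \<le> g x" if y: "0 < y" "y < 1" "0 \<le> \<sigma> y" "\<sigma> y \<le> c" for y
  proof -
    have "eq_flow (\<lambda>y. y ^ d) (\<lambda>_. L) (t1, \<sigma> y) = (y, 1 - y)"
      using d y by (intro eq_flow_power_interior) (auto simp: \<sigma>_def)
    with eq_flow_power_interior[OF d x] toll_eq_best_response2[OF t, of "\<sigma> y"] y \<open>\<sigma> x = t2\<close>
    show ?thesis by (simp add: profit2_def g_def)
  qed
  have "DERIV g x :> real d * x ^ (d - 1) * (1 - x) - \<sigma> x"
    unfolding g_def \<sigma>_def by (auto intro!: derivative_eq_intros simp: algebra_simps)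
  then have deriv: "DERIV g x :> real d * x ^ (d - 1) * (1 - x) - t2"
    using \<open>\<sigma> x = t2\<close> by simp
  have \<sigma>_lim: "(\<sigma> \<longlongrightarrow> t2) (at x within S)" for S
    unfolding \<sigma>_def using x by (auto intro!: tendsto_eq_intros)
  note interior = eventually_in_unit_interval[OF x(1,2)]
  show "t2 \<le> real d * x ^ (d - 1) * (1 - x)"
  proof (cases "t2 = 0")
    case False
    with bounds have "\<forall>\<^sub>F y in at_left x. 0 < \<sigma> y"
      by (intro order_tendstoD(1)[OF \<sigma>_lim]) simp
    with interior eventually_at_left_less have "\<forall>\<^sub>F y in at_left x. g y \<le> g x"
    proof eventually_elim
      case (elim y)
      then have "\<sigma> y \<le> \<sigma> x" using power_mono[of y x d] by (simp add: \<sigma>_def)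
      with elim \<open>\<sigma> x = t2\<close> bounds show ?case by (intro best) auto
    qed
    then show ?thesis using DERIV_nonneg_if_max_at_left[OF deriv] by simp
  qed (use x(1,2) in simp)
  show "real d * x ^ (d - 1) * (1 - x) \<le> t2" if "t2 < c"
  proof -
    from interior order_tendstoD(2)[OF \<sigma>_lim that] eventually_at_right_less
    have "\<forall>\<^sub>F y in at_right x. g y \<le> g x"
    proof eventually_elim
      case (elim y)
      then have "\<sigma> x \<le> \<sigma> y" using x power_mono[of x y d] by (simp add: \<sigma>_def)
      with elim \<open>\<sigma> x = t2\<close> bounds show ?case by (intro best) auto
    qed
    then show ?thesis using DERIV_nonpos_if_max_at_right[OF deriv] by simp
  qed
qed

text \<open>Owner 2 may always undercut to the toll \<open>t1 - L\<close>, which attracts the whole demand.\<close>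

lemma toll_eq_power_undercut:
  fixes L c t1 t2 x :: real
  assumes d: "1 \<le> d" and L: "0 \<le> L" and t: "(t1, t2) \<in> toll_eq (\<lambda>y. y ^ d) (\<lambda>_. L) c"
    and x: "0 < x" "x < 1" "x ^ d = L + t2 - t1"
  shows "t1 - L \<le> t2 * (1 - x)"
proof (cases "L \<le> t1")
  case True
  have "eq_flow (\<lambda>y. y ^ d) (\<lambda>_. L) (t1, t1 - L) = (0, 1)"
    using d by (intro eq_flow_power_link2_only) auto
  with eq_flow_power_interior[OF d x] toll_eq_best_response2[OF t, of "t1 - L"] True L
    toll_eq_bounds[OF t]
  show ?thesis by (simp add: profit2_def)
next
  case False
  moreover have "0 \<le> t2 * (1 - x)" using toll_eq_bounds[OF t] x by simp
  ultimately show ?thesis by simp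
qed

lemma social_cost_power_min:
  fixes L z :: real
  assumes z: "0 < z" and L: "real (Suc d) * z ^ d = L" and x: "feasible_flow x"
  shows "social_cost (\<lambda>y. y ^ d) (\<lambda>_. L) (z, 1 - z) \<le> social_cost (\<lambda>y. y ^ d) (\<lambda>_. L) x"
proof -
  obtain y where x_eq: "x = (y, 1 - y)" and "0 \<le> y"
    using x by (cases x) (auto simp: feasible_flow_def)
  have "z ^ Suc d + L * (y - z) \<le> y ^ Suc d"
    using power_ge_tangent[of z y "Suc d"] z \<open>0 \<le> y\<close> by (simp add: L[symmetric] algebra_simps)
  then show ?thesis
    by (simp add: x_eq social_cost_def algebra_simps)
qed

section \<open>The instance \<open>L = ((d - 1) / d) ^ d\<close>\<close>

locale monomial_network =
  fixes d :: nat and a :: real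
  assumes three_le_d: "3 \<le> d" and a_eq: "a = (real d - 1) / real d"
begin

lemma one_le_d: "1 \<le> d"
  using three_le_d by simp

lemma d_times_a: "real d * a = real d - 1"
  and d_times_one_minus_a: "real d * (1 - a) = 1"
  using three_le_d by (simp_all add: a_eq field_simps)

lemma a_pos: "0 < a" and a_less_one: "a < 1"
  using three_le_d by (simp_all add: a_eq field_simps)

lemma a_power_pos: "0 < a ^ d" and a_power_less_one: "a ^ d < 1"
  using a_pos a_less_one one_le_d by (simp_all add: power_less_one_iff)

lemma d_times_a_power: "real d * a ^ d = (real d - 1) * a ^ (d - 1)"
proof -
  have "real d * a ^ d = (real d * a) * a ^ (d - 1)"
    using one_le_d by (simp add: mult.assoc flip: power_Suc)
  then show ?thesis by (simp add: d_times_a)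
qed

lemma lat1_eq: "lat1 d = (\<lambda>y. y ^ d)" and lat2_eq: "lat2 d = (\<lambda>_. a ^ d)"
  by (simp_all add: fun_eq_iff lat1_def lat2_def a_eq)

lemma eq_flow_diag: "eq_flow (lat1 d) (lat2 d) (c, c) = (a, 1 - a)"
  unfolding lat1_eq lat2_eq
  using one_le_d a_pos a_less_one by (intro eq_flow_power_interior) auto

lemma toll_eq_interior_share:
  assumes "0 < c" and t: "(t1, t2) \<in> toll_eq (lat1 d) (lat2 d) c"
  obtains x where "0 < x" "x < 1" "x ^ d = a ^ d + t2 - t1"
proof -
  note s = toll_eq_power_interior[OF one_le_d a_power_pos a_power_less_one \<open>0 < c\<close>
      t[unfolded lat1_eq lat2_eq]]
  show thesis
    by (rule that[of "root d (a ^ d + t2 - t1)"])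
      (use s one_le_d in \<open>simp_all add: real_root_pow_pos\<close>)
qed

lemma toll_eq_toll1_le_toll2:
  assumes "0 < c" and t: "(t1, t2) \<in> toll_eq (lat1 d) (lat2 d) c"
  shows "t1 \<le> t2"
proof (rule ccontr)
  assume "\<not> t1 \<le> t2"
  then have "t2 < t1" by simp
  obtain x where x: "0 < x" "x < 1" "x ^ d = a ^ d + t2 - t1"
    using toll_eq_interior_share[OF assms] .
  note t' = t[unfolded lat1_eq lat2_eq]
  have "x < a"
    using \<open>t2 < t1\<close> x a_pos by (intro power_less_imp_less_base[of x d]) auto
  have "t2 < c" using \<open>t2 < t1\<close> toll_eq_bounds[OF t] by linarith
  then have t2_eq: "t2 = real d * x ^ (d - 1) * (1 - x)"
    using toll_eq_power_owner2_first_order[OF one_le_d t' x] by linarith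
  have x_pow: "x ^ d = x ^ (d - 1) * x" using one_le_d by (simp flip: power_Suc2)
  have "t2 * x \<le> x ^ d"
    using toll_eq_power_undercut[OF one_le_d _ t' x] a_pos x(3) by (simp add: algebra_simps)
  then have "t2 \<le> x ^ (d - 1)" using x(1) by (simp add: x_pow)
  moreover have "real d * (1 - x) = 1 + real d * (a - x)"
    using d_times_one_minus_a by (simp add: algebra_simps)
  then have "1 < real d * (1 - x)"
    using \<open>x < a\<close> one_le_d by simp
  then have "x ^ (d - 1) < x ^ (d - 1) * (real d * (1 - x))"
    using x by simp
  ultimately show False by (simp add: t2_eq algebra_simps)
qed

lemma toll_eq_toll2_le_toll1:
  assumes "0 < c" and t: "(t1, t2) \<in> toll_eq (lat1 d) (lat2 d) c"
  shows "t2 \<le> t1"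
proof (rule ccontr)
  assume "\<not> t2 \<le> t1"
  then have "t1 < t2" by simp
  obtain x where x: "0 < x" "x < 1" "x ^ d = a ^ d + t2 - t1"
    using toll_eq_interior_share[OF assms] .
  note t' = t[unfolded lat1_eq lat2_eq]
  have "a < x"
    using \<open>t1 < t2\<close> x a_pos by (intro power_less_imp_less_base[of a d]) auto
  have "t1 < c" using \<open>t1 < t2\<close> toll_eq_bounds[OF t] by linarith
  then have t1_eq: "t1 = real d * x ^ d"
    using toll_eq_power_owner1_first_order[OF one_le_d t' x] by linarith
  have x_pow: "x ^ d = x ^ (d - 1) * x" and a_pow: "a ^ d = a ^ (d - 1) * a"
    using one_le_d by (simp_all flip: power_Suc2)
  have "x ^ (d - 1) * ((2 * real d + 1) * x - real d) \<le> a ^ (d - 1) * a"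
    using toll_eq_power_owner2_first_order(1)[OF one_le_d t' x] x t1_eq x_pow a_pow
    by (simp add: algebra_simps)
  moreover have "a < (2 * real d + 1) * x - real d"
  proof -
    have "(2 * real d + 1) * a - real d - a = real d - 2"
      using d_times_a by (simp add: algebra_simps)
    then have "a \<le> (2 * real d + 1) * a - real d" using three_le_d by linarith
    moreover have "(2 * real d + 1) * a < (2 * real d + 1) * x"
      using \<open>a < x\<close> by simp
    ultimately show ?thesis by linarith
  qed
  then have "a ^ (d - 1) * a < x ^ (d - 1) * ((2 * real d + 1) * x - real d)"
    using \<open>a < x\<close> a_pos three_le_d by (intro mult_strict_mono power_strict_mono) auto
  ultimately show False by simp
qed

lemma toll_eq_positive_diag:
  assumes "0 < c" and t: "(t1, t2) \<in> toll_eq (lat1 d) (lat2 d) c"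
  shows "t1 = c \<and> t2 = c \<and> c \<le> a ^ (d - 1)"
proof -
  have "t1 = t2"
    using toll_eq_toll1_le_toll2[OF assms] toll_eq_toll2_le_toll1[OF assms] by linarith
  note t' = t[unfolded lat1_eq lat2_eq]
  have a_share: "0 < a" "a < 1" "a ^ d = a ^ d + t2 - t1"
    using a_pos a_less_one \<open>t1 = t2\<close> by simp_all
  have "real d * a ^ (d - 1) * (1 - a) = a ^ (d - 1) * (real d * (1 - a))"
    by (simp add: algebra_simps)
  also have "\<dots> = a ^ (d - 1)" by (simp add: d_times_one_minus_a)
  finally have "t2 \<le> a ^ (d - 1)"
    using toll_eq_power_owner2_first_order(1)[OF one_le_d t' a_share] by linarith
  moreover have "t1 = c"
  proof (rule ccontr)
    assume "t1 \<noteq> c"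
    then have "real d * a ^ d \<le> t1"
      using toll_eq_power_owner1_first_order(2)[OF one_le_d t' a_share] toll_eq_bounds[OF t] by simp
    moreover note d_times_a_power
    moreover have "a ^ (d - 1) < (real d - 1) * a ^ (d - 1)"
      using three_le_d a_pos by simp
    ultimately show False using \<open>t2 \<le> a ^ (d - 1)\<close> \<open>t1 = t2\<close> by simp
  qed
  ultimately show ?thesis using \<open>t1 = t2\<close> by simp
qed

lemma profit1_tangent_bound:
  assumes c: "c \<le> a ^ (d - 1)" and y: "a \<le> y"
  shows "(a ^ d + c) * y - y ^ Suc d \<le> c * a"
proof -
  define L where "L = a ^ d"
  have "a ^ (d - 1) \<le> (real d - 1) * a ^ (d - 1)"
    using three_le_d a_pos by simp
  with c d_times_a_power have "c \<le> real d * L" by (simp add: L_def)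
  then have "(c - real d * L) * (y - a) \<le> 0"
    using y by (simp add: mult_nonpos_nonneg)
  moreover have "(c - real d * L) * (y - a) = c * y - c * a - real d * L * y + real d * L * a"
    by (simp add: algebra_simps)
  moreover have "a ^ Suc d + real (Suc d) * a ^ d * (y - a) \<le> y ^ Suc d"
    using power_ge_tangent[of a y "Suc d"] a_pos y by simp
  moreover have "a ^ Suc d + real (Suc d) * a ^ d * (y - a)
      = L * a + real d * L * y + L * y - real d * L * a - L * a"
    by (simp add: L_def algebra_simps)
  ultimately show ?thesis by (simp add: L_def algebra_simps)
qed

lemma profit1_diag_le:
  assumes c: "c \<le> a ^ (d - 1)" and \<tau>: "0 \<le> \<tau>" "\<tau> \<le> c"
  shows "profit1 (lat1 d) (lat2 d) (\<tau>, c) \<le> profit1 (lat1 d) (lat2 d) (c, c)"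
proof -
  define L where "L = a ^ d"
  have L: "0 < L" "L < 1"
    using a_power_pos a_power_less_one by (simp_all add: L_def)
  note bound = profit1_tangent_bound[OF c, folded L_def]
  have "\<tau> * fst (eq_flow (\<lambda>y. y ^ d) (\<lambda>_. L) (\<tau>, c)) \<le> c * a"
  proof (cases "1 + \<tau> \<le> L + c")
    case True
    then show ?thesis
      using bound[of 1] a_less_one one_le_d by (simp add: eq_flow_power_link1_only)
  next
    case False
    define y where "y = root d (L + c - \<tau>)"
    have y: "0 < y" "y < 1" "y ^ d = L + c - \<tau>"
      using False \<tau> L one_le_d by (simp_all add: y_def real_root_pow_pos)
    have "a ^ d \<le> y ^ d" using y(3) \<tau> by (simp add: L_def)
    then have "a \<le> y" using a_pos y(1) one_le_d by simp
    have "\<tau> * y = (L + c - y ^ d) * y" using y(3) by simp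
    also have "\<dots> = (L + c) * y - y ^ Suc d" by (simp add: algebra_simps)
    finally have "\<tau> * y = (L + c) * y - y ^ Suc d" .
    with bound[OF \<open>a \<le> y\<close>] show ?thesis
      by (simp add: eq_flow_power_interior[OF one_le_d y])
  qed
  then show ?thesis
    by (simp add: profit1_def eq_flow_diag[unfolded lat1_eq lat2_eq] lat1_eq lat2_eq L_def)
qed

lemma profit2_diag_le:
  assumes c: "c \<le> a ^ (d - 1)" and \<sigma>: "0 \<le> \<sigma>" "\<sigma> \<le> c"
  shows "profit2 (lat1 d) (lat2 d) (c, \<sigma>) \<le> profit2 (lat1 d) (lat2 d) (c, c)"
proof -
  define L where "L = a ^ d"
  have L: "0 < L" "L < 1"
    using a_power_pos a_power_less_one by (simp_all add: L_def)
  have L_eq: "L = a ^ (d - 1) * a"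
    using one_le_d by (simp add: L_def flip: power_Suc2)
  have "\<sigma> * snd (eq_flow (\<lambda>y. y ^ d) (\<lambda>_. L) (c, \<sigma>)) \<le> c * (1 - a)"
  proof (cases "L + \<sigma> \<le> c")
    case True
    have "0 \<le> a * (a ^ (d - 1) - c)" using a_pos c by simp
    with True show ?thesis
      using one_le_d by (simp add: eq_flow_power_link2_only L_eq algebra_simps)
  next
    case False
    define y where "y = root d (L + \<sigma> - c)"
    have y: "0 < y" "y < 1" "y ^ d = L + \<sigma> - c"
      using False \<sigma> L one_le_d by (simp_all add: y_def real_root_pow_pos)
    have "y ^ d \<le> a ^ d" using y(3) \<sigma> by (simp add: L_def)
    then have "y \<le> a" using a_pos y(1) one_le_d by simp
    have "y ^ (d - 1) * (1 - y) \<le> a ^ (d - 1) * (1 - a)"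
      using power_mult_one_minus_le[of "d - 1" y] three_le_d y by (simp add: a_eq of_nat_diff)
    moreover have "y ^ d = y * y ^ (d - 1)" using one_le_d by (simp flip: power_Suc)
    ultimately have "y ^ d * (1 - y) \<le> y * (a ^ (d - 1) * (1 - a))"
      using y(1) by (simp add: mult.assoc mult_left_mono)
    moreover have "\<sigma> * (1 - y) = (c - L + y ^ d) * (1 - y)" using y(3) by simp
    then have "\<sigma> * (1 - y) = (c - L) * (1 - y) + y ^ d * (1 - y)" by (simp add: algebra_simps)
    moreover have "(a - y) * (c - a ^ (d - 1)) \<le> 0"
      using \<open>y \<le> a\<close> c by (simp add: mult_nonneg_nonpos)
    moreover have "(c - L) * (1 - y) + y * (a ^ (d - 1) * (1 - a)) - c * (1 - a)
        = (a - y) * (c - a ^ (d - 1))"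
      by (simp add: L_eq algebra_simps)
    ultimately show ?thesis
      by (simp add: eq_flow_power_interior[OF one_le_d y])
  qed
  then show ?thesis
    by (simp add: profit2_def eq_flow_diag[unfolded lat1_eq lat2_eq] lat1_eq lat2_eq L_def)
qed

lemma diag_mem_toll_eq:
  assumes "0 \<le> c" and "c \<le> a ^ (d - 1)"
  shows "(c, c) \<in> toll_eq (lat1 d) (lat2 d) c"
  unfolding toll_eq_def
  using assms profit1_diag_le[OF assms(2)] profit2_diag_le[OF assms(2)] by auto

lemma toll_eq_nonempty_iff:
  assumes "0 \<le> c"
  shows "toll_eq (lat1 d) (lat2 d) c \<noteq> {} \<longleftrightarrow> c \<le> a ^ (d - 1)"
proof
  assume "toll_eq (lat1 d) (lat2 d) c \<noteq> {}"
  then obtain t1 t2 where t: "(t1, t2) \<in> toll_eq (lat1 d) (lat2 d) c" by auto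
  show "c \<le> a ^ (d - 1)"
  proof (cases "c = 0")
    case False
    with toll_eq_positive_diag[OF _ t] assms show ?thesis by simp
  qed (use a_pos in simp)
qed (use diag_mem_toll_eq assms in blast)

lemma toll_eq_eq_diag:
  assumes "0 \<le> c" and "c \<le> a ^ (d - 1)"
  shows "toll_eq (lat1 d) (lat2 d) c = {(c, c)}"
proof (intro equalityI subsetI)
  fix t assume t: "t \<in> toll_eq (lat1 d) (lat2 d) c"
  show "t \<in> {(c, c)}"
  proof (cases "c = 0")
    case True
    with toll_eq_bounds[of "fst t" "snd t" "lat1 d" "lat2 d" c] t show ?thesis
      by (simp add: prod_eq_iff)
  next
    case False
    with toll_eq_positive_diag[of c "fst t" "snd t"] t assms show ?thesis by (simp add: prod_eq_iff)
  qed
qed (use diag_mem_toll_eq assms in simp)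

definition opt_share :: real where
  "opt_share = a / (real d + 1) powr (1 / real d)"

lemma opt_share_pos: "0 < opt_share" and opt_share_le_one: "opt_share \<le> 1"
proof -
  have "1 \<le> (real d + 1) powr (1 / real d)"
    by (intro ge_one_powr_ge_zero) auto
  then show "0 < opt_share" "opt_share \<le> 1"
    using a_pos a_less_one by (auto simp: opt_share_def divide_le_eq_1)
qed

lemma Suc_d_opt_share_power: "real (Suc d) * opt_share ^ d = a ^ d"
proof -
  have "((real d + 1) powr (1 / real d)) ^ d = real d + 1"
    using one_le_d by (simp add: powr_realpow[symmetric] powr_powr)
  then show ?thesis
    by (simp add: opt_share_def power_divide add.commute)
qed

lemma social_cost_opt_share:
  "social_cost (lat1 d) (lat2 d) (opt_share, 1 - opt_share)
     = a ^ d * (1 - real d * opt_share / (real d + 1))"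
proof -
  have "opt_share ^ Suc d = opt_share * a ^ d / (real d + 1)"
    using Suc_d_opt_share_power by (simp add: field_simps)
  then show ?thesis
    by (simp add: social_cost_def lat1_eq lat2_eq field_simps)
qed

lemma cost_ratio:
  "social_cost (lat1 d) (lat2 d) (a, 1 - a) / social_cost (lat1 d) (lat2 d) (opt_share, 1 - opt_share)
     = ratio_value d"
proof -
  define r where "r = (real d + 1) powr (1 / real d)"
  define q where "q = (real d + 1) powr ((real d + 1) / real d)"
  have "1 \<le> r" unfolding r_def by (intro ge_one_powr_ge_zero) auto
  have q_eq: "q = (real d + 1) * r"
    using one_le_d by (simp add: q_def r_def add_divide_distrib powr_add)
  have "real d * opt_share / (real d + 1) = (real d - 1) / q"
    using one_le_d by (simp add: opt_share_def q_eq d_times_a[symmetric] r_def)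
  then have cost: "social_cost (lat1 d) (lat2 d) (opt_share, 1 - opt_share) = a ^ d * (1 - (real d - 1) / q)"
    by (simp add: social_cost_opt_share)
  have "real d - 1 < q"
  proof -
    have "real d + 1 \<le> (real d + 1) * r"
      using \<open>1 \<le> r\<close> by simp
    then show ?thesis using q_eq by linarith
  qed
  then have "1 - (real d - 1) / q = (q - (real d - 1)) / q"
    using one_le_d by (simp add: field_simps)
  then have "a ^ d / social_cost (lat1 d) (lat2 d) (opt_share, 1 - opt_share) = q / (q - (real d - 1))"
    using a_pos unfolding cost by simp
  moreover have "social_cost (lat1 d) (lat2 d) (a, 1 - a) = a ^ d"
    by (simp add: social_cost_def lat1_eq lat2_eq algebra_simps)
  ultimately show ?thesis
    by (simp add: ratio_value_def q_def)
qed

lemma INF_worst_ratio: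
  "(INF c \<in> {0::real..}. worst_ratio (lat1 d) (lat2 d) x c)
     = ereal (social_cost (lat1 d) (lat2 d) (a, 1 - a) / social_cost (lat1 d) (lat2 d) x)"
    (is "_ = ereal ?\<rho>")
proof -
  have worst: "worst_ratio (lat1 d) (lat2 d) x c = (if c \<le> a ^ (d - 1) then ereal ?\<rho> else \<infinity>)"
    if "0 \<le> c" for c
    using toll_eq_nonempty_iff[OF that] toll_eq_eq_diag[OF that] eq_flow_diag[of c]
    by (simp add: worst_ratio_def)
  show ?thesis
  proof (rule antisym)
    have "(INF c \<in> {0::real..}. worst_ratio (lat1 d) (lat2 d) x c) \<le> worst_ratio (lat1 d) (lat2 d) x 0"
      by (rule INF_lower) simp
    then show "(INF c \<in> {0::real..}. worst_ratio (lat1 d) (lat2 d) x c) \<le> ereal ?\<rho>"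
      using worst[of 0] a_pos by simp
    show "ereal ?\<rho> \<le> (INF c \<in> {0::real..}. worst_ratio (lat1 d) (lat2 d) x c)"
      by (rule INF_greatest) (simp add: worst)
  qed
qed

end

theorem mainTheorem16:
  fixes d :: nat
  assumes "d \<ge> 3"
  defines "xopt \<equiv> ((real d - 1) / (real d * (real d + 1) powr (1 / real d)),
                    1 - (real d - 1) / (real d * (real d + 1) powr (1 / real d)))"
  shows "(\<forall>c \<ge> 0. toll_eq (lat1 d) (lat2 d) c \<noteq> {} \<longleftrightarrow> c \<le> ((real d - 1) / real d) ^ (d - 1))
    \<and> (\<forall>c. 0 \<le> c \<and> c \<le> ((real d - 1) / real d) ^ (d - 1) \<longrightarrow>
           toll_eq (lat1 d) (lat2 d) c = {(c, c)}
         \<and> eq_flow (lat1 d) (lat2 d) (c, c) = eq_flow (lat1 d) (lat2 d) (0, 0)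
         \<and> eq_flow (lat1 d) (lat2 d) (0, 0) = ((real d - 1) / real d, 1 / real d))
    \<and> feasible_flow xopt
    \<and> (\<forall>x. feasible_flow x \<longrightarrow> social_cost (lat1 d) (lat2 d) xopt \<le> social_cost (lat1 d) (lat2 d) x)
    \<and> (INF c \<in> {0::real..}. worst_ratio (lat1 d) (lat2 d) xopt c) = ereal (ratio_value d)
    \<and> filterlim ratio_value at_top sequentially"
proof -
  interpret monomial_network d "(real d - 1) / real d"
    using assms(1) by unfold_locales simp_all
  have xopt: "xopt = (opt_share, 1 - opt_share)"
    by (simp add: xopt_def opt_share_def)
  have "1 - (real d - 1) / real d = 1 / real d"
    using one_le_d by (simp add: field_simps)
  then have untolled: "eq_flow (lat1 d) (lat2 d) (c, c) = ((real d - 1) / real d, 1 / real d)" for c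
    by (simp add: eq_flow_diag)
  have optimal: "social_cost (lat1 d) (lat2 d) xopt \<le> social_cost (lat1 d) (lat2 d) x"
    if "feasible_flow x" for x
    using social_cost_power_min[OF opt_share_pos Suc_d_opt_share_power that]
    by (simp add: xopt lat1_eq lat2_eq)
  have "filterlim ratio_value at_top sequentially"
    unfolding ratio_value_def by real_asymp
  with toll_eq_nonempty_iff toll_eq_eq_diag untolled optimal opt_share_pos opt_share_le_one
  show ?thesis
    by (simp add: xopt INF_worst_ratio cost_ratio feasible_flow_def)
qed

end
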